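(* Let $N\ge1$, let $(\Xi_{n,k})_{(n,k)\in\mathcal{I}}$ be independent $\mathcal{N}(0,I_d)$ random vectors and $X^N_{i,j}=\sum_{(n,k)\in\mathcal{I}_N}\psi_{n,k}(m_{i,j})\,\Xi_{n,k}$ for $(i,j)\in\mathcal{I}_N$. Let $\Sigma_N$ be the block covariance matrix of the vector $(X^N_{i,j})_{(i,j)\in\mathcal{I}_N}$ and $\Psi_N=\big[\psi_{n,k}(m_{i,j})\big]$ the block matrix with block rows indexed by $(i,j)$ and block columns by $(n,k)$, both listed in the order $(0,0),(1,0),(2,0),(2,1),(3,0),\dots$. Then $\Sigma_N=\Psi_N\Psi_N^T$, and this is the Cholesky decomposition of $\Sigma_N$.
   Context: Let $d,m\geq 1$. Let $\alpha:[0,1]\to\mathbb{R}^{d\times d}$, $\sqrt{\Gamma}:[0,1]\to\mathbb{R}^{d\times m}$ be continuous, $\Gamma=\sqrt{\Gamma}\sqrt{\Gamma}^{T}$. Let $F(s,t)$ be the flow ($\partial_tF(s,t)=\alpha(t)F(s,t)$, $F(s,s)=I_d$), $h_u(s,t)=\int_s^t F(w,u)\Gamma(w)F(w,u)^Tdw$, $h=h_0$, $g(t)=F(0,t)$. Non-degeneracy: $F(u,v)h_u(u,v)F(u,v)^T$ is positive definite for all $0\le u<v\le1$. $\mathcal{I}=\{(0,0)\}\cup\{(n,k):n\ge1,\ 0\le k<2^{n-1}\}$, $\mathcal{I}_N=\{(0,0)\}\cup\{(n,k)\in\mathcal{I}:1\le n\le N\}$. Partition: fix $\rho\in(0,1)$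 and reals $l_{n,k}<m_{n,k}<r_{n,k}$ ($n\ge1$) with $l_{1,0}=0$, $r_{1,0}=1$, $l_{n+1,2k}=l_{n,k}$, $r_{n+1,2k}=l_{n+1,2k+1}=m_{n,k}$, $r_{n+1,2k+1}=r_{n,k}$, $\max(r_{n,k}-m_{n,k},m_{n,k}-l_{n,k})<\rho(r_{n,k}-l_{n,k})$; and by convention $m_{0,0}=1$. Basis: for $n\ge1$ (writing $l,m,r$ for $l_{n,k},m_{n,k},r_{n,k}$), $\Sigma_{n,k}=h_m(l,m)h_m(l,r)^{-1}h_m(m,r)$, $\sigma_{n,k}$ its lower-triangular Cholesky factor with positive diagonal, $L_{n,k}=h(l,m)^{-1}g(m)^{-1}\sigma_{n,k}$, $R_{n,k}=h(m,r)^{-1}g(m)^{-1}\sigma_{n,k}$, $\psi_{n,k}(t)=g(t)h(l,t)L_{n,k}$ on $[l,m]$, $g(t)h(t,r)R_{n,k}$ on $[m,r]$, $0$ elsewhere; $\sigma_{0,0}$ is the lower-triangular Cholesky factor of $g(1)h(0,1)g(1)^T$, $L_{0,0}=h(0,1)^{-1}g(1)^{-1}\sigma_{0,0}$, $\psi_{0,0}(t)=g(t)h(0,t)L_{0,0}$. *)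

theory Defs
  imports "HOL-Analysis.Analysis" "HOL-Probability.Probability"
begin

type_synonym 'd sqm = "((real, 'd) vec, 'd) vec"
type_synonym 'd rvec = "(real, 'd) vec"

definition Iset :: "(nat \<times> nat) set" where
  "Iset = {(0,0)} \<union> {(n,k). 1 \<le> n \<and> k < 2^(n-1)}"

definition IsetN :: "nat \<Rightarrow> (nat \<times> nat) set" where
  "IsetN N = {(0,0)} \<union> {(n,k). (n,k) \<in> Iset \<and> 1 \<le> n \<and> n \<le> N}"

(* position in the listing (0,0),(1,0),(2,0),(2,1),(3,0),... *)
definition pos :: "nat \<times> nat \<Rightarrow> nat" where
  "pos p = (if fst p = 0 then 0 else 2^(fst p - 1) + snd p)"

(* the partition points, with the convention m_{0,0} = 1 *)
definition midpt :: "(nat \<Rightarrow> nat \<Rightarrow> real) \<Rightarrow> nat \<times> nat \<Rightarrow> real" where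
  "midpt m p = (if fst p = 0 then 1 else m (fst p) (snd p))"

definition hu :: "(real \<Rightarrow> real \<Rightarrow> ('d::{finite,linorder}) sqm) \<Rightarrow> (real \<Rightarrow> ('d::{finite,linorder}) sqm)
                  \<Rightarrow> real \<Rightarrow> real \<Rightarrow> real \<Rightarrow> ('d::{finite,linorder}) sqm" where
  "hu F Gam u s t = integral {s..t} (\<lambda>w. F w u ** Gam w ** transpose (F w u))"

definition hh :: "(real \<Rightarrow> real \<Rightarrow> ('d::{finite,linorder}) sqm) \<Rightarrow> (real \<Rightarrow> ('d::{finite,linorder}) sqm)
                  \<Rightarrow> real \<Rightarrow> real \<Rightarrow> ('d::{finite,linorder}) sqm" where
  "hh F Gam s t = hu F Gam 0 s t"

definition gg :: "(real \<Rightarrow> real \<Rightarrow> ('d::{finite,linorder}) sqm) \<Rightarrow> real \<Rightarrow> ('d::{finite,linorder}) sqm" where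
  "gg F t = F 0 t"

definition lower_tri :: "('d::{finite,linorder}) sqm \<Rightarrow> bool" where
  "lower_tri A \<longleftrightarrow> (\<forall>i j. i < j \<longrightarrow> A $ i $ j = 0)"

definition chol :: "('d::{finite,linorder}) sqm \<Rightarrow> ('d::{finite,linorder}) sqm" where
  "chol S = (THE L. lower_tri L \<and> (\<forall>i. L $ i $ i > 0) \<and> L ** transpose L = S)"

definition SigmaNK :: "(real \<Rightarrow> real \<Rightarrow> ('d::{finite,linorder}) sqm) \<Rightarrow> (real \<Rightarrow> ('d::{finite,linorder}) sqm)
     \<Rightarrow> (nat \<Rightarrow> nat \<Rightarrow> real) \<Rightarrow> (nat \<Rightarrow> nat \<Rightarrow> real) \<Rightarrow> (nat \<Rightarrow> nat \<Rightarrow> real)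
     \<Rightarrow> nat \<Rightarrow> nat \<Rightarrow> ('d::{finite,linorder}) sqm" where
  "SigmaNK F Gam l m r n k =
     hu F Gam (m n k) (l n k) (m n k) ** matrix_inv (hu F Gam (m n k) (l n k) (r n k))
       ** hu F Gam (m n k) (m n k) (r n k)"

definition sigmaNK :: "(real \<Rightarrow> real \<Rightarrow> ('d::{finite,linorder}) sqm) \<Rightarrow> (real \<Rightarrow> ('d::{finite,linorder}) sqm)
     \<Rightarrow> (nat \<Rightarrow> nat \<Rightarrow> real) \<Rightarrow> (nat \<Rightarrow> nat \<Rightarrow> real) \<Rightarrow> (nat \<Rightarrow> nat \<Rightarrow> real)
     \<Rightarrow> nat \<times> nat \<Rightarrow> ('d::{finite,linorder}) sqm" where
  "sigmaNK F Gam l m r p =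
     (if fst p = 0 then chol (gg F 1 ** hh F Gam 0 1 ** transpose (gg F 1))
      else chol (SigmaNK F Gam l m r (fst p) (snd p)))"

definition Lmat :: "(real \<Rightarrow> real \<Rightarrow> ('d::{finite,linorder}) sqm) \<Rightarrow> (real \<Rightarrow> ('d::{finite,linorder}) sqm)
     \<Rightarrow> (nat \<Rightarrow> nat \<Rightarrow> real) \<Rightarrow> (nat \<Rightarrow> nat \<Rightarrow> real) \<Rightarrow> (nat \<Rightarrow> nat \<Rightarrow> real)
     \<Rightarrow> nat \<times> nat \<Rightarrow> ('d::{finite,linorder}) sqm" where
  "Lmat F Gam l m r p =
     (if fst p = 0 then matrix_inv (hh F Gam 0 1) ** matrix_inv (gg F 1) ** sigmaNK F Gam l m r p
      else matrix_inv (hh F Gam (l (fst p) (snd p)) (m (fst p) (snd p)))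
             ** matrix_inv (gg F (m (fst p) (snd p))) ** sigmaNK F Gam l m r p)"

definition Rmat :: "(real \<Rightarrow> real \<Rightarrow> ('d::{finite,linorder}) sqm) \<Rightarrow> (real \<Rightarrow> ('d::{finite,linorder}) sqm)
     \<Rightarrow> (nat \<Rightarrow> nat \<Rightarrow> real) \<Rightarrow> (nat \<Rightarrow> nat \<Rightarrow> real) \<Rightarrow> (nat \<Rightarrow> nat \<Rightarrow> real)
     \<Rightarrow> nat \<times> nat \<Rightarrow> ('d::{finite,linorder}) sqm" where
  "Rmat F Gam l m r p =
     matrix_inv (hh F Gam (m (fst p) (snd p)) (r (fst p) (snd p)))
       ** matrix_inv (gg F (m (fst p) (snd p))) ** sigmaNK F Gam l m r p"

definition psi :: "(real \<Rightarrow> real \<Rightarrow> ('d::{finite,linorder}) sqm) \<Rightarrow> (real \<Rightarrow> ('d::{finite,linorder}) sqm)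
     \<Rightarrow> (nat \<Rightarrow> nat \<Rightarrow> real) \<Rightarrow> (nat \<Rightarrow> nat \<Rightarrow> real) \<Rightarrow> (nat \<Rightarrow> nat \<Rightarrow> real)
     \<Rightarrow> nat \<times> nat \<Rightarrow> real \<Rightarrow> ('d::{finite,linorder}) sqm" where
  "psi F Gam l m r p t =
     (if fst p = 0 then gg F t ** hh F Gam 0 t ** Lmat F Gam l m r p
      else (let n = fst p; k = snd p in
        if l n k \<le> t \<and> t \<le> m n k then gg F t ** hh F Gam (l n k) t ** Lmat F Gam l m r p
        else if m n k \<le> t \<and> t \<le> r n k then gg F t ** hh F Gam t (r n k) ** Rmat F Gam l m r p
        else 0))"

(* Scalar index set of the block vector (X^N_{i,j})_{(i,j) \<in> \<I>_N}: (block, component) *)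
definition blk_idx :: "nat \<Rightarrow> ((nat \<times> nat) \<times> 'd) set" where
  "blk_idx N = IsetN N \<times> UNIV"

definition idx_less :: "(nat \<times> nat) \<times> 'd::{finite,linorder} \<Rightarrow> (nat \<times> nat) \<times> 'd \<Rightarrow> bool" where
  "idx_less a b \<longleftrightarrow> pos (fst a) < pos (fst b) \<or> (fst a = fst b \<and> snd a < snd b)"

definition PsiN :: "(real \<Rightarrow> real \<Rightarrow> ('d::{finite,linorder}) sqm) \<Rightarrow> (real \<Rightarrow> ('d::{finite,linorder}) sqm)
     \<Rightarrow> (nat \<Rightarrow> nat \<Rightarrow> real) \<Rightarrow> (nat \<Rightarrow> nat \<Rightarrow> real) \<Rightarrow> (nat \<Rightarrow> nat \<Rightarrow> real)
     \<Rightarrow> (nat \<times> nat) \<times> 'd \<Rightarrow> (nat \<times> nat) \<times> 'd \<Rightarrow> real" where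
  "PsiN F Gam l m r a b = psi F Gam l m r (fst b) (midpt m (fst a)) $ snd a $ snd b"

definition XN :: "(real \<Rightarrow> real \<Rightarrow> ('d::{finite,linorder}) sqm) \<Rightarrow> (real \<Rightarrow> ('d::{finite,linorder}) sqm)
     \<Rightarrow> (nat \<Rightarrow> nat \<Rightarrow> real) \<Rightarrow> (nat \<Rightarrow> nat \<Rightarrow> real) \<Rightarrow> (nat \<Rightarrow> nat \<Rightarrow> real)
     \<Rightarrow> (nat \<times> nat \<Rightarrow> 'a \<Rightarrow> ('d::{finite,linorder}) rvec) \<Rightarrow> nat \<Rightarrow> nat \<times> nat \<Rightarrow> 'a \<Rightarrow> ('d::{finite,linorder}) rvec" where
  "XN F Gam l m r Xi N ij \<omega> =
     (\<Sum>nk\<in>IsetN N. psi F Gam l m r nk (midpt m ij) *v Xi nk \<omega>)"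

definition covariance :: "'a measure \<Rightarrow> ('a \<Rightarrow> real) \<Rightarrow> ('a \<Rightarrow> real) \<Rightarrow> real" where
  "covariance M X Y =
     integral\<^sup>L M (\<lambda>\<omega>. (X \<omega> - integral\<^sup>L M X) * (Y \<omega> - integral\<^sup>L M Y))"

definition SigmaN :: "'a measure \<Rightarrow> (real \<Rightarrow> real \<Rightarrow> ('d::{finite,linorder}) sqm) \<Rightarrow> (real \<Rightarrow> ('d::{finite,linorder}) sqm)
     \<Rightarrow> (nat \<Rightarrow> nat \<Rightarrow> real) \<Rightarrow> (nat \<Rightarrow> nat \<Rightarrow> real) \<Rightarrow> (nat \<Rightarrow> nat \<Rightarrow> real)
     \<Rightarrow> (nat \<times> nat \<Rightarrow> 'a \<Rightarrow> ('d::{finite,linorder}) rvec) \<Rightarrow> nat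
     \<Rightarrow> (nat \<times> nat) \<times> 'd \<Rightarrow> (nat \<times> nat) \<times> 'd \<Rightarrow> real" where
  "SigmaN M F Gam l m r Xi N a b =
     covariance M (\<lambda>\<omega>. XN F Gam l m r Xi N (fst a) \<omega> $ snd a)
                  (\<lambda>\<omega>. XN F Gam l m r Xi N (fst b) \<omega> $ snd b)"

definition is_cholesky :: "'i set \<Rightarrow> ('i \<Rightarrow> 'i \<Rightarrow> bool) \<Rightarrow> ('i \<Rightarrow> 'i \<Rightarrow> real)
     \<Rightarrow> ('i \<Rightarrow> 'i \<Rightarrow> real) \<Rightarrow> bool" where
  "is_cholesky I prec S L \<longleftrightarrow>
     (\<forall>a\<in>I. \<forall>b\<in>I. S a b = (\<Sum>e\<in>I. L a e * L b e)) \<and>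
     (\<forall>a\<in>I. \<forall>b\<in>I. prec a b \<longrightarrow> L a b = 0) \<and>
     (\<forall>a\<in>I. L a a > 0)"

end

theory Submission
  imports Defs
begin

(* Every coordinate of X^N_{i,j} is the linear combination sum_e Psi_N[(i,j),e] xi_e of the
   independent standard Gaussian entries xi_e of the Xi_{n,k}, so the covariance of two coordinates
   is the inner product of the corresponding rows of Psi_N: Sigma_N = Psi_N Psi_N^T.

   That this is the Cholesky decomposition is a support property of the basis. psi_{n,k} vanishes
   outside (l_{n,k}, r_{n,k}), and every midpoint m_{i,j} listed before (n,k) is either 1 or a
   partition point of level n, hence lies outside that interval; so Psi_N is block lower triangular.
   Its diagonal blocks are psi_{n,k}(m_{n,k}) = sigma_{n,k}, Cholesky factors of positive definite
   matrices. Positive definiteness of Sigma_{n,k} = A (A + B)^-1 B = (A^-1 + B^-1)^-1 comes from that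
   of A = h_m(l,m) and B = h_m(m,r), which the flow identity F(s,t) = F(u,t) F(s,u) (uniqueness for
   the linear ODE, via Gronwall) reduces to the non-degeneracy hypothesis. *)

section \<open>Matrix algebra and positive definite matrices\<close>

lemma matrix_add_rdistrib: "((A::real^'n^'m) + B) ** (C::real^'p^'n) = A ** C + B ** C"
  by (simp add: matrix_matrix_mult_def vec_eq_iff sum.distrib distrib_right)

lemma matrix_diff_ldistrib: "(A::real^'n^'m) ** ((B::real^'p^'n) - C) = A ** B - A ** C"
  by (simp add: matrix_matrix_mult_def vec_eq_iff sum_subtractf right_diff_distrib)

lemma matrix_diff_rdistrib: "((A::real^'n^'m) - B) ** (C::real^'p^'n) = A ** C - B ** C"
  by (simp add: matrix_matrix_mult_def vec_eq_iff sum_subtractf left_diff_distrib)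

lemma transpose_add: "transpose ((A::real^'n^'m) + B) = transpose A + transpose B"
  by (simp add: transpose_def vec_eq_iff)

lemma bounded_bilinear_matrix_mult:
  "bounded_bilinear ((**) :: real^'n^'m \<Rightarrow> real^'p^'n \<Rightarrow> real^'p^'m)"
proof -
  have "bilinear ((**) :: real^'n^'m \<Rightarrow> real^'p^'n \<Rightarrow> real^'p^'m)"
    unfolding bilinear_def linear_iff
    by (auto simp: matrix_add_ldistrib matrix_add_rdistrib matrix_scalar_ac
        scalar_matrix_assoc[symmetric])
  then show ?thesis using bilinear_conv_bounded_bilinear by blast
qed

lemma bounded_linear_transpose: "bounded_linear (transpose :: real^'n^'m \<Rightarrow> real^'m^'n)"
  unfolding linear_conv_bounded_linear[symmetric] linear_iff
  by (auto simp: transpose_def vec_eq_iff)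

lemma bounded_linear_sandwich: "bounded_linear (\<lambda>X::real^'n^'m. C ** X ** D)"
  using bounded_linear_compose[OF bounded_bilinear.bounded_linear_left[OF bounded_bilinear_matrix_mult]
      bounded_bilinear.bounded_linear_right[OF bounded_bilinear_matrix_mult]] .

lemma matrix_inv_right: "invertible (A::real^'n^'n) \<Longrightarrow> A ** matrix_inv A = mat 1"
  unfolding invertible_def matrix_inv_def by (rule someI2_ex) auto

lemma matrix_inv_left: "invertible (A::real^'n^'n) \<Longrightarrow> matrix_inv A ** A = mat 1"
  unfolding invertible_def matrix_inv_def by (rule someI2_ex) auto

lemma matrix_inv_unique:
  fixes A B :: "real^'n^'n"
  assumes "A ** B = mat 1"
  shows "matrix_inv A = B"
proof -
  have "B ** A = mat 1" using assms matrix_left_right_inverse by blast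
  then have inv: "invertible A" unfolding invertible_def using assms by blast
  have "matrix_inv A = matrix_inv A ** (A ** B)" using assms by simp
  also have "\<dots> = B" using matrix_inv_left[OF inv] by (simp add: matrix_mul_assoc)
  finally show ?thesis .
qed

lemma symmetric_matrix_inv:
  fixes C :: "real^'n^'n"
  assumes "invertible C" "transpose C = C"
  shows "transpose (matrix_inv C) = matrix_inv C"
proof -
  have "transpose C ** transpose (matrix_inv C) = mat 1"
    using matrix_inv_left[OF assms(1)] by (metis matrix_transpose_mul transpose_mat)
  then have "matrix_inv (transpose C) = transpose (matrix_inv C)" by (rule matrix_inv_unique)
  then show ?thesis using assms(2) by simp
qed

lemma matrix_mul_cancel_inverses:
  fixes G H S :: "real^'n^'n"
  assumes "invertible G" "invertible H"
  shows "G ** H ** (matrix_inv H ** matrix_inv G ** S) = S"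
proof -
  have "G ** H ** (matrix_inv H ** matrix_inv G ** S) = G ** (H ** matrix_inv H) ** matrix_inv G ** S"
    by (simp only: matrix_mul_assoc)
  also have "\<dots> = S" by (simp add: assms matrix_inv_right matrix_mul_assoc)
  finally show ?thesis .
qed

lemma symmetric_matrix_entries: "transpose (S::real^'n^'n) = S \<Longrightarrow> S $ a $ b = S $ b $ a"
  by (metis transpose_def vec_lambda_beta)

definition pos_def_matrix :: "real^'n^'n \<Rightarrow> bool" where
  "pos_def_matrix P \<longleftrightarrow> (\<forall>x. x \<noteq> 0 \<longrightarrow> x \<bullet> (P *v x) > 0)"

lemma pos_def_matrix_invertible:
  assumes "pos_def_matrix (P::real^'n^'n)"
  shows "invertible P"
proof -
  have "inj ((*v) P)"
  proof (rule injI)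
    fix x y assume "P *v x = P *v y"
    then have "P *v (x - y) = 0" by (simp add: matrix_vector_mult_diff_distrib)
    then show "x = y"
      using assms unfolding pos_def_matrix_def by (metis inner_zero_right less_irrefl right_minus_eq)
  qed
  then show ?thesis using matrix_left_invertible_injective invertible_left_inverse by blast
qed

lemma pos_def_matrix_congruence:
  fixes A P :: "real^'n^'n"
  assumes A: "invertible A" and P: "pos_def_matrix P"
  shows "pos_def_matrix (A ** P ** transpose A)"
  unfolding pos_def_matrix_def
proof (intro allI impI)
  fix x :: "real^'n" assume "x \<noteq> 0"
  moreover have "x = (matrix_inv (transpose A) ** transpose A) *v x"
    using matrix_inv_left[OF transpose_invertible[OF A]] by simp
  ultimately have "transpose A *v x \<noteq> 0" by (metis matrix_vector_mul_assoc matrix_vector_mult_0_right)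
  moreover have "x \<bullet> ((A ** P ** transpose A) *v x) = x \<bullet> (A *v (P *v (transpose A *v x)))"
    by (simp only: matrix_vector_mul_assoc matrix_mul_assoc)
  moreover have "\<dots> = (transpose A *v x) \<bullet> (P *v (transpose A *v x))"
    by (simp add: dot_lmul_matrix)
  ultimately show "x \<bullet> ((A ** P ** transpose A) *v x) > 0" using P unfolding pos_def_matrix_def by simp
qed

lemma pos_def_matrix_inv:
  assumes P: "pos_def_matrix (P::real^'n^'n)"
  shows "pos_def_matrix (matrix_inv P)"
  unfolding pos_def_matrix_def
proof (intro allI impI)
  fix x :: "real^'n" assume x: "x \<noteq> 0"
  define y where "y = matrix_inv P *v x"
  have xy: "x = P *v y"
    unfolding y_def using matrix_inv_right[OF pos_def_matrix_invertible[OF P]]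
    by (simp add: matrix_vector_mul_assoc)
  then have "y \<noteq> 0" using x by auto
  then have "y \<bullet> (P *v y) > 0" using P unfolding pos_def_matrix_def by blast
  then show "x \<bullet> (matrix_inv P *v x) > 0" by (simp add: xy[symmetric] y_def[symmetric] inner_commute)
qed

lemma pos_def_matrix_add: "pos_def_matrix A \<Longrightarrow> pos_def_matrix B \<Longrightarrow> pos_def_matrix (A + B)"
  unfolding pos_def_matrix_def by (simp add: matrix_vector_mult_add_rdistrib inner_add_right add_pos_pos)

text \<open>The parallel sum \<open>A (A + B)\<^sup>-\<^sup>1 B\<close> is the inverse of \<open>A\<^sup>-\<^sup>1 + B\<^sup>-\<^sup>1\<close>.\<close>

lemma parallel_sum_pos_def_symmetric:
  fixes A B :: "real^'n^'n"
  assumes A: "pos_def_matrix A" "transpose A = A" and B: "pos_def_matrix B" "transpose B = B"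
  defines "S \<equiv> A ** matrix_inv (A + B) ** B"
  shows "pos_def_matrix S" "transpose S = S"
proof -
  have iA: "invertible A" and iB: "invertible B" and iAB: "invertible (A + B)"
    using pos_def_matrix_invertible A B pos_def_matrix_add by blast+
  define C where "C = matrix_inv A + matrix_inv B"
  have AB: "(A + B) ** matrix_inv A = B ** matrix_inv A + A ** matrix_inv A"
    by (simp add: matrix_add_rdistrib add.commute)
  have "S ** C = A ** matrix_inv (A + B) ** (B ** matrix_inv A) + A ** matrix_inv (A + B) ** (B ** matrix_inv B)"
    by (simp add: S_def C_def matrix_add_ldistrib matrix_mul_assoc)
  also have "\<dots> = A ** matrix_inv (A + B) ** ((A + B) ** matrix_inv A)"
    unfolding AB by (simp add: matrix_inv_right[OF iB] matrix_inv_right[OF iA] matrix_add_ldistrib)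
  also have "\<dots> = A ** (matrix_inv (A + B) ** (A + B)) ** matrix_inv A"
    by (simp only: matrix_mul_assoc)
  also have "\<dots> = mat 1" by (simp add: matrix_inv_left[OF iAB] matrix_inv_right[OF iA])
  finally have "S ** C = mat 1" .
  then have CS: "C ** S = mat 1" using matrix_left_right_inverse by blast
  then have S: "S = matrix_inv C" by (simp add: matrix_inv_unique)
  have "pos_def_matrix C" unfolding C_def by (intro pos_def_matrix_add pos_def_matrix_inv A B)
  then show "pos_def_matrix S" unfolding S by (rule pos_def_matrix_inv)
  have "transpose C = C"
    unfolding C_def transpose_add using symmetric_matrix_inv[OF iA A(2)] symmetric_matrix_inv[OF iB B(2)] by simp
  moreover have "invertible C" using CS \<open>S ** C = mat 1\<close> unfolding invertible_def by blast
  ultimately show "transpose S = S" unfolding S by (rule symmetric_matrix_inv[rotated])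
qed

section \<open>Existence and uniqueness of the Cholesky factor\<close>

lemma finite_linorder_less_induct [case_names less]:
  fixes i :: "'d::{finite,linorder}"
  assumes "\<And>i. (\<And>j. j < i \<Longrightarrow> P j) \<Longrightarrow> P i"
  shows "P i"
proof (induction i rule: measure_induct_rule[of "\<lambda>i::'d. card {j. j < i}"])
  case (less i)
  show ?case
  proof (rule assms)
    fix j assume "j < i"
    then have "{k. k < j} \<subset> {k. k < i}" by auto
    then have "card {k. k < j} < card {k. k < i}" by (simp add: psubset_card_mono)
    then show "P j" using less by blast
  qed
qed

lemma initial_segment_induct:
  fixes P :: "'d::{finite,linorder} set \<Rightarrow> bool"
  assumes empty: "P {}" and step: "\<And>i. P {j. j < i} \<Longrightarrow> P {j. j \<le> i}"
  shows initial_segment_induct_less: "P {j. j < i}" and initial_segment_induct_UNIV: "P UNIV"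
proof -
  show less: "P {j. j < i}" for i :: 'd
  proof (induction i rule: finite_linorder_less_induct)
    case (less i)
    show ?case
    proof (cases "{j. j < i} = {}")
      case True then show ?thesis using empty by simp
    next
      case False
      define i' where "i' = Max {j. j < i}"
      have "i' < i" using Max_in[OF _ False] i'_def by auto
      moreover have "{j. j < i} = {j. j \<le> i'}"
        using Max_ge[of "{j. j < i}"] \<open>i' < i\<close> i'_def by fastforce
      ultimately show ?thesis using step less by metis
    qed
  qed
  have "UNIV = {j. j \<le> Max (UNIV :: 'd set)}" using Max_ge[of UNIV] by auto
  then show "P UNIV" using step[OF less] by metis
qed

lemma vec_eq_sum_axis:
  fixes p :: "real^'n"
  assumes "\<And>m. m \<notin> A \<Longrightarrow> p $ m = 0"
  shows "p = (\<Sum>m\<in>A. (p $ m) *\<^sub>R axis m 1)"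
proof (subst vec_eq_iff, intro allI)
  fix n
  have "(\<Sum>m\<in>A. (p $ m) *\<^sub>R axis m (1::real)) $ n = (\<Sum>m\<in>A. if n = m then p $ m else 0)"
    unfolding sum_component by (intro sum.cong) (auto simp: axis_def)
  also have "\<dots> = (if n \<in> A then p $ n else 0)" by (simp add: sum.delta)
  finally show "p $ n = (\<Sum>m\<in>A. (p $ m) *\<^sub>R axis m 1) $ n" using assms[of n] by simp
qed

context
  fixes v :: "'d::{finite,linorder} \<Rightarrow> 'd rvec" and i :: 'd
  assumes triangular: "\<And>j m. j < i \<Longrightarrow> j < m \<Longrightarrow> v j $ m = 0"
    and diag_nonzero: "\<And>j. j < i \<Longrightarrow> v j $ j \<noteq> 0"
begin

lemma axis_in_span_triangular: "k < i \<Longrightarrow> axis k 1 \<in> span (v ` {j. j < i})"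
proof (induction k rule: finite_linorder_less_induct)
  case (less k)
  have "{m. m \<le> k} = insert k {m. m < k}" by auto
  then have "v k = (v k $ k) *\<^sub>R axis k 1 + (\<Sum>m\<in>{m. m < k}. (v k $ m) *\<^sub>R axis m 1)"
    using vec_eq_sum_axis[of "{m. m \<le> k}" "v k"] triangular[OF less.prems] by force
  then have "v k - (\<Sum>m\<in>{m. m < k}. (v k $ m) *\<^sub>R axis m 1) = (v k $ k) *\<^sub>R axis k 1"
    by (simp add: diff_eq_eq)
  then have "axis k 1 = (1 / v k $ k) *\<^sub>R (v k - (\<Sum>m\<in>{m. m < k}. (v k $ m) *\<^sub>R axis m 1))"
    using diag_nonzero[OF less.prems] by simp
  also have "\<dots> \<in> span (v ` {j. j < i})"
    using less by (intro span_mul span_diff span_sum) (auto intro: span_base)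
  finally show ?case .
qed

lemma supported_below_in_span_triangular:
  assumes "\<And>m. \<not> m < i \<Longrightarrow> p $ m = 0"
  shows "p \<in> span (v ` {j. j < i})"
  using vec_eq_sum_axis[of "{m. m < i}" p] assms
  by (metis (mono_tags) axis_in_span_triangular mem_Collect_eq span_mul span_sum)

lemma inj_on_triangular: "inj_on v {j. j < i}"
proof (rule inj_onI)
  fix a b assume a: "a \<in> {j. j < i}" and b: "b \<in> {j. j < i}" and "v a = v b"
  then have "v a $ b = v b $ b" "v b $ a = v a $ a" by simp_all
  then show "a = b"
    using a b triangular[of a b] triangular[of b a] diag_nonzero[of a] diag_nonzero[of b]
    by (cases a b rule: linorder_cases) auto
qed

lemma triangular_forward_substitution:
  "\<exists>p. (\<forall>m. \<not> m < i \<longrightarrow> p $ m = 0) \<and> (\<forall>j. j < i \<longrightarrow> p \<bullet> v j = c j)"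
proof -
  define P where "P = (\<lambda>A. A \<subseteq> {j. j < i} \<longrightarrow>
      (\<exists>p::'d rvec. (\<forall>m. m \<notin> A \<longrightarrow> p $ m = 0) \<and> (\<forall>j\<in>A. p \<bullet> v j = c j)))"
  have "P {j. j < i}"
  proof (induction rule: initial_segment_induct_less)
    show "P {}" unfolding P_def by (intro impI exI[of _ 0]) auto
  next
    fix k assume IH: "P {j. j < k}"
    show "P {j. j \<le> k}" unfolding P_def
    proof
      assume "{j. j \<le> k} \<subseteq> {j. j < i}"
      then have k: "k < i" by auto
      then obtain p where p0: "\<And>m. \<not> m < k \<Longrightarrow> p $ m = 0" and pv: "\<And>j. j < k \<Longrightarrow> p \<bullet> v j = c j"
        using IH unfolding P_def by fastforce
      define p' where "p' = p + ((c k - p \<bullet> v k) / v k $ k) *\<^sub>R axis k 1"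
      have "p' \<bullet> v j = p \<bullet> v j + ((c k - p \<bullet> v k) / v k $ k) * v j $ k" for j
        unfolding p'_def by (simp add: inner_add_left inner_commute[of "axis k 1"] inner_axis)
      then show "\<exists>p'. (\<forall>m. m \<notin> {j. j \<le> k} \<longrightarrow> p' $ m = 0) \<and> (\<forall>j\<in>{j. j \<le> k}. p' \<bullet> v j = c j)"
        using p0 pv triangular[of _ k] k diag_nonzero[OF k]
        by (intro exI[of _ p']) (auto simp: p'_def axis_def order.order_iff_strict)
    qed
  qed
  then show ?thesis unfolding P_def by auto
qed

end

definition chol_rows :: "('d::{finite,linorder}) sqm \<Rightarrow> 'd set \<Rightarrow> ('d \<Rightarrow> 'd rvec) \<Rightarrow> bool" where
  "chol_rows S A v \<longleftrightarrow>
     (\<forall>j\<in>A. (\<forall>m. j < m \<longrightarrow> v j $ m = 0) \<and> v j $ j > 0 \<and> (\<forall>k\<in>A. v j \<bullet> v k = S $ j $ k))"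

lemma chol_rows_schur_complement_pos:
  fixes S :: "('d::{finite,linorder}) sqm"
  assumes S: "pos_def_matrix S" "transpose S = S"
    and rows: "chol_rows S {j. j < i} v"
    and supp: "\<And>m. \<not> m < i \<Longrightarrow> p $ m = 0" and pv: "\<And>j. j < i \<Longrightarrow> p \<bullet> v j = S $ i $ j"
  shows "p \<bullet> p < S $ i $ i"
proof -
  have tri: "\<And>j m. j < i \<Longrightarrow> j < m \<Longrightarrow> v j $ m = 0"
    and diag: "\<And>j. j < i \<Longrightarrow> v j $ j \<noteq> 0"
    and gram: "\<And>j k. j < i \<Longrightarrow> k < i \<Longrightarrow> v j \<bullet> v k = S $ j $ k"
    using rows unfolding chol_rows_def by auto
  have "p \<in> span (v ` {j. j < i})" by (rule supported_below_in_span_triangular[OF tri diag supp])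
  then obtain u where "p = (\<Sum>w\<in>v ` {j. j < i}. u w *\<^sub>R w)"
    using span_finite[of "v ` {j. j < i}"] by auto
  then have pa: "p = (\<Sum>j\<in>{j. j < i}. u (v j) *\<^sub>R v j)"
    by (simp add: sum.reindex[OF inj_on_triangular[OF tri diag]])
  define a where "a = (\<lambda>j. u (v j))"
  \<comment> \<open>\<open>x = (a, -1, 0)\<close> with \<open>p = \<Sum>\<^sub>j a\<^sub>j v\<^sub>j\<close> has \<open>x \<bullet> S x = S\<^sub>i\<^sub>i - p \<bullet> p\<close>\<close>
  define x :: "'d rvec" where "x = (\<chi> m. if m < i then a m else if m = i then -1 else 0)"
  have xm: "x $ m = (if m < i then a m else if m = i then -1 else 0)" for m by (simp add: x_def)
  have Sx: "(S *v x) $ m = (\<Sum>n\<in>{n. n < i}. S $ m $ n * a n) - S $ m $ i" for m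
  proof -
    have "(S *v x) $ m = (\<Sum>n\<in>UNIV. (if n < i then S $ m $ n * a n else 0) + (if n = i then - S $ m $ i else 0))"
      unfolding matrix_vector_mult_def by (auto intro!: sum.cong simp: xm)
    then show ?thesis by (simp add: sum.distrib sum.If_cases)
  qed
  have "(\<Sum>n\<in>{n. n < i}. S $ m $ n * a n) = v m \<bullet> p" if "m < i" for m
    unfolding pa a_def inner_sum_right by (auto intro!: sum.cong simp: gram that)
  then have Sx_below: "(S *v x) $ m = 0" if "m < i" for m
    using Sx[of m] pv[OF that] symmetric_matrix_entries[OF S(2), of m i] that by (simp add: inner_commute)
  have "(\<Sum>n\<in>{n. n < i}. S $ i $ n * a n) = p \<bullet> p"
    by (subst (2) pa) (auto intro!: sum.cong simp: inner_sum_right a_def pv)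
  then have Sx_at: "(S *v x) $ i = p \<bullet> p - S $ i $ i" using Sx by simp
  have "x \<bullet> (S *v x) = (\<Sum>m\<in>UNIV. x $ m * (S *v x) $ m)" by (simp add: inner_vec_def)
  also have "\<dots> = (\<Sum>m\<in>UNIV. if m = i then S $ i $ i - p \<bullet> p else 0)"
    by (intro sum.cong) (auto simp: xm Sx_below Sx_at)
  finally have "x \<bullet> (S *v x) = S $ i $ i - p \<bullet> p" by simp
  moreover have "x \<noteq> 0" using xm[of i] by auto
  ultimately show ?thesis using S(1) unfolding pos_def_matrix_def by auto
qed

lemma chol_rows_extend:
  fixes S :: "('d::{finite,linorder}) sqm"
  assumes S: "pos_def_matrix S" "transpose S = S" and rows: "chol_rows S {j. j < i} v"
  shows "\<exists>v'. chol_rows S {j. j \<le> i} v'"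
proof -
  have tri: "\<And>j m. j < i \<Longrightarrow> j < m \<Longrightarrow> v j $ m = 0"
    and diag: "\<And>j. j < i \<Longrightarrow> v j $ j > 0"
    and gram: "\<And>j k. j < i \<Longrightarrow> k < i \<Longrightarrow> v j \<bullet> v k = S $ j $ k"
    using rows unfolding chol_rows_def by auto
  have sym: "S $ a $ b = S $ b $ a" for a b by (rule symmetric_matrix_entries[OF S(2)])
  obtain p where supp: "\<And>m. \<not> m < i \<Longrightarrow> p $ m = 0" and pv: "\<And>j. j < i \<Longrightarrow> p \<bullet> v j = S $ i $ j"
    using triangular_forward_substitution[of i v "\<lambda>j. S $ i $ j"] tri diag by fastforce
  define t where "t = sqrt (S $ i $ i - p \<bullet> p)"
  have t: "t > 0" "t * t = S $ i $ i - p \<bullet> p"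
    using chol_rows_schur_complement_pos[OF S rows supp pv] by (auto simp: t_def)
  have pi: "p $ i = 0" using supp by simp
  define v' where "v' = v(i := p + t *\<^sub>R axis i 1)"
  have new_row: "(p + t *\<^sub>R axis i 1) \<bullet> (p + t *\<^sub>R axis i 1) = S $ i $ i"
    using t by (simp add: inner_add_left inner_add_right inner_commute[of "axis i 1"] inner_axis pi)
  have old_rows: "v q \<bullet> (p + t *\<^sub>R axis i 1) = S $ q $ i" if "q < i" for q
    using pv[OF that] tri[OF that that] sym[of q i] by (simp add: inner_add_right inner_axis inner_commute)
  show ?thesis
    unfolding chol_rows_def
  proof (intro exI[of _ v'] ballI conjI allI impI)
    fix j assume j: "j \<in> {j. j \<le> i}"
    show "0 < v' j $ j" using j diag[of j] t pi by (cases "j = i") (auto simp: v'_def)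
    show "v' j $ m = 0" if "j < m" for m
      using j that tri[of j m] supp[of m] by (cases "j = i") (auto simp: v'_def axis_def)
    show "v' j \<bullet> v' k = S $ j $ k" if "k \<in> {j. j \<le> i}" for k
      using j that gram[of j k] new_row old_rows[of j] old_rows[of k] sym[of j i] sym[of k i]
      by (cases "j = i"; cases "k = i") (auto simp: v'_def inner_commute)
  qed
qed

lemma chol_exists:
  fixes S :: "('d::{finite,linorder}) sqm"
  assumes "pos_def_matrix S" "transpose S = S"
  shows "\<exists>L. lower_tri L \<and> (\<forall>i. L $ i $ i > 0) \<and> L ** transpose L = S"
proof -
  have "\<exists>v. chol_rows S UNIV v"
  proof (rule initial_segment_induct_UNIV)
    show "\<exists>v. chol_rows S {} v" by (simp add: chol_rows_def)
    show "\<exists>v. chol_rows S {j. j \<le> i} v" if "\<exists>v. chol_rows S {j. j < i} v" for i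
      using that chol_rows_extend[OF assms] by blast
  qed
  then obtain v where v: "chol_rows S UNIV v" by blast
  show ?thesis
    using v by (intro exI[of _ "\<chi> j. v j"])
      (simp add: lower_tri_def chol_rows_def vec_eq_iff matrix_matrix_mult_def transpose_def inner_vec_def)
qed

lemma chol_unique:
  fixes L L' :: "('d::{finite,linorder}) sqm"
  assumes L: "lower_tri L" "\<And>i. L $ i $ i > 0" and L': "lower_tri L'" "\<And>i. L' $ i $ i > 0"
    and eq: "L ** transpose L = L' ** transpose L'"
  shows "L = L'"
proof -
  have gram: "L $ i \<bullet> L $ j = L' $ i \<bullet> L' $ j" for i j
    using arg_cong[OF eq, of "\<lambda>A. A $ i $ j"]
    by (simp add: matrix_matrix_mult_def transpose_def inner_vec_def)
  have "L $ i = L' $ i" for i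
  proof (induction i rule: finite_linorder_less_induct)
    case (less i)
    define d where "d = L $ i - L' $ i"
    have below: "d $ k = 0" if "k < i" for k
    proof -
      have "orthogonal d (axis k 1)"
      proof (rule orthogonal_to_span)
        show "axis k 1 \<in> span ((\<lambda>j. L $ j) ` {j. j < i})"
          using L that by (intro axis_in_span_triangular) (auto simp: lower_tri_def less_imp_neq[symmetric])
        show "orthogonal d y" if y: "y \<in> (\<lambda>j. L $ j) ` {j. j < i}" for y
        proof -
          obtain j where j: "j < i" "y = L $ j" using y by blast
          then show ?thesis using less[OF j(1)] gram[of i j] by (simp add: orthogonal_def d_def inner_diff_left)
        qed
      qed
      then show ?thesis by (simp add: orthogonal_def inner_axis)
    qed
    have above: "d $ k = 0" if "i < k" for k using L(1) L'(1) that by (simp add: d_def lower_tri_def)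
    have d: "d = (d $ i) *\<^sub>R axis i 1"
    proof (subst vec_eq_iff, intro allI)
      show "d $ k = ((d $ i) *\<^sub>R axis i 1) $ k" for k
        using below[of k] above[of k] by (cases k i rule: linorder_cases) (auto simp: axis_def)
    qed
    define c where "c = d $ i"
    have Li: "L $ i = L' $ i + c *\<^sub>R axis i 1" using d by (simp add: c_def d_def algebra_simps)
    have "L $ i \<bullet> L $ i = L' $ i \<bullet> L' $ i + c * (2 * L' $ i $ i + c)"
      unfolding Li by (simp add: inner_add_left inner_add_right inner_commute[of "axis i 1"] inner_axis algebra_simps)
    moreover have "2 * L' $ i $ i + c > 0" using L(2)[of i] L'(2)[of i] by (simp add: c_def d_def)
    ultimately have "c = 0" using gram[of i i] by simp
    then show ?case using Li by simp
  qed
  then show ?thesis by (simp add: vec_eq_iff)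
qed

lemma chol_is_cholesky_factor:
  fixes S :: "('d::{finite,linorder}) sqm"
  assumes "pos_def_matrix S" "transpose S = S"
  shows "lower_tri (chol S) \<and> (\<forall>i. chol S $ i $ i > 0) \<and> chol S ** transpose (chol S) = S"
proof -
  have "\<exists>!L. lower_tri L \<and> (\<forall>i. L $ i $ i > 0) \<and> L ** transpose L = S"
    using chol_exists[OF assms] chol_unique by metis
  then show ?thesis unfolding chol_def by (rule theI')
qed

section \<open>Linear matrix flows\<close>

lemma gronwall_two_sided:
  fixes q q' :: "real \<Rightarrow> real"
  assumes ab: "a \<le> b" and cont: "continuous_on {a..b} q"
    and deriv: "\<And>x. a < x \<Longrightarrow> x < b \<Longrightarrow> (q has_real_derivative q' x) (at x)"
    and bound: "\<And>x. a < x \<Longrightarrow> x < b \<Longrightarrow> \<bar>q' x\<bar> \<le> K * q x"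
  shows "q b \<le> exp (K * (b - a)) * q a" "q a \<le> exp (K * (b - a)) * q b"
proof -
  have exp_shift: "exp (K * x) * (exp (- K * y) * q z) = exp (K * (x - y)) * q z" for x y z
  proof -
    have "exp (K * x) * exp (- K * y) = exp (K * (x - y))" by (simp add: exp_add[symmetric] algebra_simps)
    then show ?thesis by (simp only: mult.assoc[symmetric])
  qed
  have "exp (- K * b) * q b \<le> exp (- K * a) * q a"
  proof (rule DERIV_nonpos_imp_decreasing_open[OF ab])
    fix x assume x: "a < x" "x < b"
    have "((\<lambda>x. exp (- K * x) * q x) has_real_derivative exp (- K * x) * (q' x - K * q x)) (at x)"
      by (auto intro!: derivative_eq_intros deriv[OF x] simp: algebra_simps)
    moreover have "exp (- K * x) * (q' x - K * q x) \<le> 0"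
      using bound[OF x] by (intro mult_nonneg_nonpos) auto
    ultimately show "\<exists>y. ((\<lambda>x. exp (- K * x) * q x) has_real_derivative y) (at x) \<and> y \<le> 0" by blast
  qed (intro continuous_intros cont)
  then have "exp (K * b) * (exp (- K * b) * q b) \<le> exp (K * b) * (exp (- K * a) * q a)" by simp
  then show "q b \<le> exp (K * (b - a)) * q a" unfolding exp_shift by simp
  have "exp (- K * - a) * q a \<le> exp (- K * - b) * q b"
  proof (rule DERIV_nonneg_imp_increasing_open[OF ab])
    fix x assume x: "a < x" "x < b"
    have "((\<lambda>x. exp (- K * - x) * q x) has_real_derivative exp (K * x) * (q' x + K * q x)) (at x)"
      by (auto intro!: derivative_eq_intros deriv[OF x] simp: algebra_simps)
    moreover have "exp (K * x) * (q' x + K * q x) \<ge> 0"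
      using bound[OF x] by (intro mult_nonneg_nonneg) auto
    ultimately show "\<exists>y. ((\<lambda>x. exp (- K * - x) * q x) has_real_derivative y) (at x) \<and> y \<ge> 0" by blast
  qed (intro continuous_intros cont)
  then have "exp (K * - a) * (exp (- K * - a) * q a) \<le> exp (K * - a) * (exp (- K * - b) * q b)" by simp
  then show "q a \<le> exp (K * (b - a)) * q b" unfolding exp_shift by simp
qed

lemma continuous_on_matrix_inverse_bounded:
  fixes A B :: "'a::topological_space \<Rightarrow> real^'n^'n"
  assumes cont: "continuous_on S A" and inv: "\<And>w. w \<in> S \<Longrightarrow> A w ** B w = mat 1"
    and bound: "\<And>w. w \<in> S \<Longrightarrow> norm (B w) \<le> K"
  shows "continuous_on S B"
  unfolding continuous_on_def
proof
  fix w0 assume w0: "w0 \<in> S"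
  obtain c where c: "\<And>X Y. norm ((X::real^'n^'n) ** (Y::real^'n^'n)) \<le> norm X * norm Y * c" "c > 0"
    using bounded_bilinear.pos_bounded[OF bounded_bilinear_matrix_mult] by blast
  have BA: "B w ** A w = mat 1" if "w \<in> S" for w using inv[OF that] matrix_left_right_inverse by blast
  have "norm (B w - B w0) \<le> (c * c * K * K) * norm (A w0 - A w)" if w: "w \<in> S" for w
  proof -
    have "B w ** (A w0 - A w) ** B w0 = B w ** (A w0 ** B w0) - (B w ** A w) ** B w0"
      by (simp add: matrix_diff_ldistrib matrix_diff_rdistrib matrix_mul_assoc)
    then have "B w - B w0 = B w ** (A w0 - A w) ** B w0" using inv[OF w0] BA[OF w] by simp
    then have "norm (B w - B w0) \<le> norm (B w ** (A w0 - A w)) * norm (B w0) * c" using c by simp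
    also have "\<dots> \<le> (norm (B w) * norm (A w0 - A w) * c) * norm (B w0) * c"
      using c(1)[of "B w" "A w0 - A w"] c(2) by (intro mult_right_mono) auto
    also have "\<dots> \<le> K * norm (A w0 - A w) * c * K * c"
      using bound[OF w] bound[OF w0] norm_ge_zero[of "A w0 - A w"] norm_ge_zero[of "B w"] c(2)
        order_trans[OF norm_ge_zero bound[OF w]]
      by (intro mult_right_mono mult_mono) auto
    finally show ?thesis by (simp add: algebra_simps)
  qed
  then have "\<forall>\<^sub>F w in at w0 within S. norm (B w - B w0) \<le> (c * c * K * K) * norm (A w0 - A w)"
    by (auto simp: eventually_at_filter)
  moreover have "((\<lambda>w. (c * c * K * K) * norm (A w0 - A w)) \<longlongrightarrow> 0) (at w0 within S)"
  proof -
    have "((\<lambda>w. A w0 - A w) \<longlongrightarrow> A w0 - A w0) (at w0 within S)"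
      using cont w0 unfolding continuous_on_def by (intro tendsto_intros) auto
    then have "((\<lambda>w. norm (A w0 - A w)) \<longlongrightarrow> 0) (at w0 within S)" by (simp add: tendsto_norm_zero)
    then show ?thesis by (rule tendsto_mult_right_zero)
  qed
  ultimately have "((\<lambda>w. B w - B w0) \<longlongrightarrow> 0) (at w0 within S)" by (rule Lim_null_comparison)
  then show "(B \<longlongrightarrow> B w0) (at w0 within S)" by (rule LIM_zero_cancel)
qed

locale linear_flow =
  fixes alpha :: "real \<Rightarrow> real^'n^'n" and F :: "real \<Rightarrow> real \<Rightarrow> real^'n^'n"
  assumes alpha_cont: "continuous_on {0..1} alpha"
    and flow_deriv: "\<And>s t. s \<in> {0..1} \<Longrightarrow> t \<in> {0..1} \<Longrightarrow>
        ((\<lambda>t. F s t) has_vector_derivative (alpha t ** F s t)) (at t within {0..1})"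
    and flow_init: "\<And>s. s \<in> {0..1} \<Longrightarrow> F s s = mat 1"
begin

lemma alpha_quadratic_bound: "\<exists>C. \<forall>t\<in>{0..1}. \<forall>X::real^'n^'n. \<bar>X \<bullet> (alpha t ** X)\<bar> \<le> C * (X \<bullet> X)"
proof -
  obtain c where c: "\<And>X Y. norm ((X::real^'n^'n) ** (Y::real^'n^'n)) \<le> norm X * norm Y * c" "c > 0"
    using bounded_bilinear.pos_bounded[OF bounded_bilinear_matrix_mult] by blast
  obtain K where K: "\<And>t. t \<in> {0..1} \<Longrightarrow> norm (alpha t) \<le> K"
    using compact_imp_bounded[OF compact_continuous_image[OF alpha_cont]] bounded_iff by (metis imageI compact_Icc)
  have "\<bar>X \<bullet> (alpha t ** X)\<bar> \<le> c * K * (X \<bullet> X)" if t: "t \<in> {0..1}" for t and X :: "real^'n^'n"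
  proof -
    have "\<bar>X \<bullet> (alpha t ** X)\<bar> \<le> norm X * norm (alpha t ** X)" by (rule Cauchy_Schwarz_ineq2)
    also have "\<dots> \<le> norm X * (norm (alpha t) * norm X * c)" by (intro mult_left_mono c(1)) auto
    also have "\<dots> \<le> norm X * (K * norm X * c)"
      using K[OF t] c(2) by (intro mult_left_mono mult_right_mono) auto
    also have "\<dots> = c * K * (X \<bullet> X)" by (simp add: power2_norm_eq_inner[symmetric] power2_eq_square)
    finally show ?thesis .
  qed
  then show ?thesis by blast
qed

lemma solution_growth:
  fixes Z :: "real \<Rightarrow> real^'n^'n"
  assumes C: "\<And>t (X::real^'n^'n). t \<in> {0..1} \<Longrightarrow> \<bar>X \<bullet> (alpha t ** X)\<bar> \<le> C * (X \<bullet> X)"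
    and Z: "\<And>t. t \<in> {0..1} \<Longrightarrow> (Z has_vector_derivative alpha t ** Z t) (at t within {0..1})"
    and u: "u \<in> {0..1}" and t: "t \<in> {0..1}"
  shows "Z t \<bullet> Z t \<le> exp (2 * C * \<bar>t - u\<bar>) * (Z u \<bullet> Z u)"
proof -
  define q where "q = (\<lambda>x. Z x \<bullet> Z x)"
  define q' where "q' = (\<lambda>x. 2 * (Z x \<bullet> (alpha x ** Z x)))"
  have dq: "(q has_real_derivative q' x) (at x within {0..1})" if "x \<in> {0..1}" for x
    using bounded_bilinear.has_vector_derivative[OF bounded_bilinear_inner Z[OF that] Z[OF that]]
    unfolding has_real_derivative_iff_has_vector_derivative q_def q'_def by (simp add: inner_commute)
  have "continuous_on {0..1} q"
    using dq by (intro continuous_on_vector_derivative) (auto simp: has_real_derivative_iff_has_vector_derivative)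
  then have q_cont: "continuous_on {a..b} q" if "a \<in> {0..1}" "b \<in> {0..1}" for a b
    by (rule continuous_on_subset) (use that in auto)
  have interior: "(q has_real_derivative q' x) (at x) \<and> \<bar>q' x\<bar> \<le> 2 * C * q x"
    if "a \<in> {0..1}" "b \<in> {0..1}" "a < x" "x < b" for a b x
  proof
    have "x \<in> {0<..<1}" using that by auto
    then show "(q has_real_derivative q' x) (at x)"
      using dq[of x] at_within_interior[of x "{0..1::real}"] by auto
    show "\<bar>q' x\<bar> \<le> 2 * C * q x" using C[of x "Z x"] that by (simp add: q_def q'_def abs_mult)
  qed
  show ?thesis
  proof (cases "u \<le> t")
    case True
    show ?thesis
      using gronwall_two_sided(1)[OF True q_cont[OF u t], of q' "2 * C"] interior[OF u t] True
      by (simp add: q_def mult.assoc)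
  next
    case False
    then have "t \<le> u" by simp
    show ?thesis
      using gronwall_two_sided(2)[OF \<open>t \<le> u\<close> q_cont[OF t u], of q' "2 * C"] interior[OF t u] False
      by (simp add: q_def mult.assoc)
  qed
qed

lemma solution_eq_zero:
  fixes Z :: "real \<Rightarrow> real^'n^'n"
  assumes "\<And>t. t \<in> {0..1} \<Longrightarrow> (Z has_vector_derivative alpha t ** Z t) (at t within {0..1})"
    and "u \<in> {0..1}" "Z u = 0" "t \<in> {0..1}"
  shows "Z t = 0"
proof -
  obtain C where C: "\<And>t (X::real^'n^'n). t \<in> {0..1} \<Longrightarrow> \<bar>X \<bullet> (alpha t ** X)\<bar> \<le> C * (X \<bullet> X)"
    using alpha_quadratic_bound by blast
  have "Z t \<bullet> Z t \<le> exp (2 * C * \<bar>t - u\<bar>) * (Z u \<bullet> Z u)"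
    by (rule solution_growth[OF C assms(1,2,4)])
  then have "Z t \<bullet> Z t \<le> 0" using assms(3) by simp
  then show ?thesis by (metis inner_eq_zero_iff inner_ge_zero order_antisym)
qed

lemma flow_cocycle:
  assumes s: "s \<in> {0..1}" and u: "u \<in> {0..1}" and t: "t \<in> {0..1}"
  shows "F s t = F u t ** F s u"
proof -
  have "F s t - F u t ** F s u = 0"
  proof (rule solution_eq_zero[OF _ u _ t])
    fix x :: real assume x: "x \<in> {0..1}"
    have "((\<lambda>t. F u t ** F s u) has_vector_derivative ((alpha x ** F u x) ** F s u)) (at x within {0..1})"
      using bounded_linear.has_vector_derivative[OF bounded_bilinear.bounded_linear_left[OF
          bounded_bilinear_matrix_mult] flow_deriv[OF u x]] .
    then show "((\<lambda>t. F s t - F u t ** F s u) has_vector_derivative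
        alpha x ** (F s x - F u x ** F s u)) (at x within {0..1})"
      using flow_deriv[OF s x] by (auto intro!: derivative_eq_intros simp: matrix_mul_assoc matrix_diff_ldistrib)
  qed (use flow_init[OF u] in simp)
  then show ?thesis by simp
qed

lemma flow_inverse: "s \<in> {0..1} \<Longrightarrow> t \<in> {0..1} \<Longrightarrow> F s t ** F t s = mat 1"
  using flow_cocycle[of t s t] flow_init[of t] by simp

lemma invertible_flow: "s \<in> {0..1} \<Longrightarrow> t \<in> {0..1} \<Longrightarrow> invertible (F s t)"
  unfolding invertible_def using flow_inverse[of s t] flow_inverse[of t s] by blast

lemma continuous_on_flow_snd: "s \<in> {0..1} \<Longrightarrow> continuous_on {0..1} (F s)"
  by (rule continuous_on_vector_derivative[OF flow_deriv])

lemma flow_bounded: "\<exists>K. \<forall>s\<in>{0..1}. \<forall>t\<in>{0..1}. norm (F s t) \<le> K"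
proof -
  obtain C where C: "\<And>t (X::real^'n^'n). t \<in> {0..1} \<Longrightarrow> \<bar>X \<bullet> (alpha t ** X)\<bar> \<le> C * (X \<bullet> X)"
    using alpha_quadratic_bound by blast
  have "norm (F s t) \<le> sqrt (exp (2 * \<bar>C\<bar>) * (mat 1 \<bullet> (mat 1 :: real^'n^'n)))"
    if s: "s \<in> {0..1}" and t: "t \<in> {0..1}" for s t
  proof -
    have "\<bar>t - s\<bar> \<le> 1" using s t by auto
    have "C * \<bar>t - s\<bar> \<le> \<bar>C\<bar> * \<bar>t - s\<bar>" by (intro mult_right_mono) auto
    also have "\<dots> \<le> \<bar>C\<bar>" using \<open>\<bar>t - s\<bar> \<le> 1\<close> by (intro mult_left_le) auto
    finally have "exp (2 * C * \<bar>t - s\<bar>) \<le> exp (2 * \<bar>C\<bar>)" by simp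
    have "F s t \<bullet> F s t \<le> exp (2 * C * \<bar>t - s\<bar>) * (mat 1 \<bullet> (mat 1 :: real^'n^'n))"
      using solution_growth[OF C flow_deriv[OF s] s t] flow_init[OF s] by simp
    also have "\<dots> \<le> exp (2 * \<bar>C\<bar>) * (mat 1 \<bullet> (mat 1 :: real^'n^'n))"
      using \<open>exp (2 * C * \<bar>t - s\<bar>) \<le> exp (2 * \<bar>C\<bar>)\<close> by (rule mult_right_mono) simp
    finally show ?thesis by (simp add: norm_eq_sqrt_inner)
  qed
  then show ?thesis by blast
qed

lemma continuous_on_flow_fst:
  assumes u: "u \<in> {0..1}"
  shows "continuous_on {0..1} (\<lambda>w. F w u)"
proof -
  obtain K where K: "\<And>s t. s \<in> {0..1} \<Longrightarrow> t \<in> {0..1} \<Longrightarrow> norm (F s t) \<le> K"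
    using flow_bounded by blast
  have "continuous_on {0..1} (\<lambda>w. F w 0)"
    using K by (intro continuous_on_matrix_inverse_bounded[OF continuous_on_flow_snd[of 0], where K = K]
        flow_inverse) auto
  then have "continuous_on {0..1} (\<lambda>w. F 0 u ** F w 0)"
    by (intro bounded_bilinear.continuous_on[OF bounded_bilinear_matrix_mult continuous_on_const])
  then show ?thesis
  proof (rule continuous_on_eq)
    show "F 0 u ** F w 0 = F w u" if "w \<in> {0..1}" for w using flow_cocycle[of w 0 u] u that by simp
  qed
qed

end

section \<open>Nested dyadic partitions\<close>

locale nested_partition =
  fixes l m r :: "nat \<Rightarrow> nat \<Rightarrow> real"
  assumes lmr: "\<And>n k. 1 \<le> n \<Longrightarrow> k < 2^(n-1) \<Longrightarrow> l n k < m n k \<and> m n k < r n k"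
    and l10: "l 1 0 = 0" and r10: "r 1 0 = 1"
    and refine_l: "\<And>n k. 1 \<le> n \<Longrightarrow> k < 2^(n-1) \<Longrightarrow> l (n+1) (2*k) = l n k"
    and refine_m1: "\<And>n k. 1 \<le> n \<Longrightarrow> k < 2^(n-1) \<Longrightarrow> r (n+1) (2*k) = m n k"
    and refine_m2: "\<And>n k. 1 \<le> n \<Longrightarrow> k < 2^(n-1) \<Longrightarrow> l (n+1) (2*k+1) = m n k"
    and refine_r: "\<And>n k. 1 \<le> n \<Longrightarrow> k < 2^(n-1) \<Longrightarrow> r (n+1) (2*k+1) = r n k"
begin

lemma r_eq_l_Suc: "1 \<le> n \<Longrightarrow> k + 1 < 2^(n-1) \<Longrightarrow> r n k = l n (k+1)"
proof (induction n arbitrary: k rule: nat_induct_at_least)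
  case base then show ?case by simp
next
  case (Suc n)
  have p: "(2::nat)^(Suc n - 1) = 2 * 2^(n-1)" using Suc.hyps by (cases n) auto
  obtain q b where kq: "k = 2 * q + b" and b: "b < 2" by (metis div_mult_mod_eq mod_less_divisor zero_less_numeral mult.commute)
  show ?case
  proof (cases "b = 0")
    case True
    then have q: "q < 2^(n-1)" using Suc.prems p kq by simp
    show ?thesis using refine_m1[OF Suc.hyps q] refine_m2[OF Suc.hyps q] kq True by simp
  next
    case False
    then have b1: "b = 1" using b by simp
    then have q: "q + 1 < 2^(n-1)" using Suc.prems p kq by simp
    have "r (Suc n) k = r n q" using refine_r[OF Suc.hyps, of q] q kq b1 by simp
    also have "\<dots> = l n (q + 1)" using Suc.IH[OF q] .
    also have "\<dots> = l (Suc n) (2 * (q + 1))" using refine_l[OF Suc.hyps q] by simp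
    finally show ?thesis using kq b1 by simp
  qed
qed

lemma r_le_l: "1 \<le> n \<Longrightarrow> j < k \<Longrightarrow> k < 2^(n-1) \<Longrightarrow> r n j \<le> l n k"
proof (induction k)
  case (Suc k)
  have "r n j \<le> r n k"
    using Suc lmr[of n k] by (cases "j = k") (auto intro: order_trans)
  then show ?case using r_eq_l_Suc[of n k] Suc.prems by simp
qed simp

lemma l_mono: "1 \<le> n \<Longrightarrow> j \<le> k \<Longrightarrow> k < 2^(n-1) \<Longrightarrow> l n j \<le> l n k"
  using r_le_l[of n j k] lmr[of n j] by (cases "j = k") auto

lemma l_first: "1 \<le> n \<Longrightarrow> l n 0 = 0"
  by (induction n rule: nat_induct_at_least) (use l10 refine_l[of _ 0] in auto)

lemma r_last: "1 \<le> n \<Longrightarrow> r n (2^(n-1) - 1) = 1"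
proof (induction n rule: nat_induct_at_least)
  case base then show ?case using r10 by simp
next
  case (Suc n)
  have "(2::nat)^(Suc n - 1) = 2 * 2^(n-1)" "(1::nat) \<le> 2^(n-1)" using Suc.hyps by (cases n) auto
  then have "(2::nat)^(Suc n - 1) - 1 = 2 * (2^(n-1) - 1) + 1" by arith
  then show ?case using refine_r[of n "2^(n-1) - 1"] Suc by simp
qed

lemma partition_in_unit_interval: "1 \<le> n \<Longrightarrow> k < 2^(n-1) \<Longrightarrow> 0 \<le> l n k \<and> r n k \<le> 1"
proof
  assume n: "1 \<le> n" and k: "k < 2^(n-1)"
  show "0 \<le> l n k" using l_mono[OF n _ k, of 0] l_first[OF n] by simp
  show "r n k \<le> 1"
  proof (cases "k = 2^(n-1) - 1")
    case False
    then have "r n k \<le> l n (2^(n-1) - 1)" using k by (intro r_le_l[OF n]) auto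
    also have "\<dots> < r n (2^(n-1) - 1)" using lmr[OF n, of "2^(n-1) - 1"] by simp
    finally show ?thesis using r_last[OF n] by simp
  qed (use r_last[OF n] in simp)
qed

lemma m_eq_l_finer: "1 \<le> i \<Longrightarrow> j < 2^(i-1) \<Longrightarrow>
    l (i+1+d) ((2*j+1)*2^d) = m i j \<and> (2*j+1)*2^d < (2::nat)^(i+d)"
proof (induction d)
  case 0
  have "2*j+1 < (2::nat)^i" using 0 by (cases i) auto
  then show ?case using refine_m2[OF 0] by simp
next
  case (Suc d)
  then have IH: "l (i+1+d) ((2*j+1)*2^d) = m i j" "(2*j+1)*2^d < (2::nat)^(i+1+d-1)" by auto
  have "l (i+1+Suc d) ((2*j+1)*2^Suc d) = l (i+1+d+1) (2*((2*j+1)*2^d))" by (simp add: algebra_simps)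
  also have "\<dots> = m i j" using refine_l[OF _ IH(2)] IH(1) by simp
  finally show ?case using IH(2) by simp
qed

lemma l_le_or_r_le: "1 \<le> n \<Longrightarrow> j < 2^(n-1) \<Longrightarrow> k < 2^(n-1) \<Longrightarrow> l n j \<le> l n k \<or> r n k \<le> l n j"
  using l_mono[of n j k] r_le_l[of n k j] by (cases "j \<le> k") auto

lemma level_le_of_pos_less:
  assumes "1 \<le> i" "j < 2^(i-1)" "1 \<le> n" "k < 2^(n-1)" and "pos (i,j) < pos (n,k)"
  shows "i \<le> n"
proof (rule ccontr)
  assume "\<not> i \<le> n"
  then have "(2::nat)^n \<le> 2^(i-1)" by (simp add: power_increasing)
  moreover have "pos (n,k) < 2^n" using assms(3,4) by (cases n) (auto simp: pos_def)
  moreover have "2^(i-1) \<le> pos (i,j)" using assms(1) by (simp add: pos_def)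
  ultimately show False using assms(5) by linarith
qed

lemma midpt_outside_later:
  assumes n: "1 \<le> n" and k: "k < 2^(n-1)" and q: "q \<in> Iset" and lt: "pos q < pos (n,k)"
  shows "midpt m q \<le> l n k \<or> r n k \<le> midpt m q"
proof (cases "fst q = 0")
  case True
  then show ?thesis using partition_in_unit_interval[OF n k] by (simp add: midpt_def)
next
  case False
  then obtain i j where qij: "q = (i,j)" and i: "1 \<le> i" and j: "j < 2^(i-1)"
    using q by (cases q) (auto simp: Iset_def)
  have t: "midpt m q = m i j" using qij i by (simp add: midpt_def)
  have "i \<le> n" using level_le_of_pos_less[OF i j n k] lt qij by simp
  then consider "i = n" | "i < n" by fastforce
  then show ?thesis
  proof cases
    case 1
    then have "j < k" using lt qij n by (simp add: pos_def)
    then show ?thesis using lmr[of n j] r_le_l[OF n _ k] 1 i j t by force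
  next
    case 2
    then obtain d where d: "n = i + 1 + d" using less_imp_Suc_add by fastforce
    then have "l n ((2*j+1)*2^d) = m i j" "(2*j+1)*2^d < 2^(n-1)" using m_eq_l_finer[OF i j, of d] by auto
    then show ?thesis using l_le_or_r_le[OF n _ k] t by metis
  qed
qed

end

section \<open>Covariance of Gaussian linear combinations\<close>

lemma (in prob_space) std_normal_moments:
  assumes D: "distributed M lborel X std_normal_density"
  shows "integrable M X" "expectation X = 0"
    "integrable M (\<lambda>\<omega>. X \<omega> * X \<omega>)" "expectation (\<lambda>\<omega>. X \<omega> * X \<omega>) = 1"
proof -
  show "integrable M X"
    using distributed_integrable[OF D, of "\<lambda>x. x"] integrable_std_normal_moment[of 1] by simp
  show "expectation X = 0" by (rule standard_normal_distributed_expectation[OF D])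
  show "integrable M (\<lambda>\<omega>. X \<omega> * X \<omega>)"
    using distributed_integrable[OF D, of "\<lambda>x. x^2"] integrable_std_normal_moment[of 2]
    by (simp add: power2_eq_square)
  have "expectation (\<lambda>\<omega>. (X \<omega>)^2) = integral\<^sup>L lborel (\<lambda>x. std_normal_density x * x ^ 2)"
    using distributed_integral[OF D, of "\<lambda>x. x^2"] by simp
  also have "\<dots> = 1" using integral_std_normal_moment_even[of 1] by simp
  finally show "expectation (\<lambda>\<omega>. X \<omega> * X \<omega>) = 1" by (simp add: power2_eq_square)
qed

lemma (in prob_space) indep_std_normal_products:
  assumes ind: "indep_vars (\<lambda>_. borel) \<xi> I"
    and D: "\<And>e. e \<in> I \<Longrightarrow> distributed M lborel (\<xi> e) std_normal_density"
    and e: "e \<in> I" and f: "f \<in> I"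
  shows "integrable M (\<lambda>\<omega>. \<xi> e \<omega> * \<xi> f \<omega>)"
    "expectation (\<lambda>\<omega>. \<xi> e \<omega> * \<xi> f \<omega>) = (if e = f then 1 else 0)"
proof -
  note moments = std_normal_moments[OF D]
  have "integrable M (\<lambda>\<omega>. \<xi> e \<omega> * \<xi> f \<omega>) \<and> expectation (\<lambda>\<omega>. \<xi> e \<omega> * \<xi> f \<omega>) = (if e = f then 1 else 0)"
  proof (cases "e = f")
    case True then show ?thesis using moments(3,4)[OF e] by simp
  next
    case False
    have ind2: "indep_vars (\<lambda>_. borel) \<xi> {e, f}" using indep_vars_subset[OF ind] e f by auto
    have int: "\<And>i. i \<in> {e, f} \<Longrightarrow> integrable M (\<xi> i)" using moments(1) e f by auto
    have "integrable M (\<lambda>\<omega>. \<Prod>i\<in>{e, f}. \<xi> i \<omega>)"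
      by (rule indep_vars_integrable[OF _ ind2 int]) simp
    moreover have "expectation (\<lambda>\<omega>. \<Prod>i\<in>{e, f}. \<xi> i \<omega>) = (\<Prod>i\<in>{e, f}. expectation (\<xi> i))"
      by (rule indep_vars_lebesgue_integral[OF _ ind2 int]) simp
    ultimately show ?thesis using False moments(2)[OF e] moments(2)[OF f] by simp
  qed
  then show "integrable M (\<lambda>\<omega>. \<xi> e \<omega> * \<xi> f \<omega>)"
    "expectation (\<lambda>\<omega>. \<xi> e \<omega> * \<xi> f \<omega>) = (if e = f then 1 else 0)" by simp_all
qed

lemma (in prob_space) covariance_indep_std_normal_combinations:
  fixes \<xi> :: "'i \<Rightarrow> 'a \<Rightarrow> real"
  assumes ind: "indep_vars (\<lambda>_. borel) \<xi> I"
    and D: "\<And>e. e \<in> I \<Longrightarrow> distributed M lborel (\<xi> e) std_normal_density"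
    and E: "finite E" "E \<subseteq> I"
  shows "covariance M (\<lambda>\<omega>. \<Sum>e\<in>E. a e * \<xi> e \<omega>) (\<lambda>\<omega>. \<Sum>e\<in>E. b e * \<xi> e \<omega>) = (\<Sum>e\<in>E. a e * b e)"
proof -
  note moments = std_normal_moments[OF D] and products = indep_std_normal_products[OF ind D]
  have mean: "expectation (\<lambda>\<omega>. \<Sum>e\<in>E. c e * \<xi> e \<omega>) = 0" for c
    using E moments(1,2) by (subst Bochner_Integration.integral_sum) (auto simp: subset_iff intro!: sum.neutral)
  have "(\<Sum>e\<in>E. a e * \<xi> e \<omega>) * (\<Sum>e\<in>E. b e * \<xi> e \<omega>) =
      (\<Sum>e\<in>E. \<Sum>f\<in>E. a e * b f * (\<xi> e \<omega> * \<xi> f \<omega>))" for \<omega>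
    by (simp add: sum_product algebra_simps)
  then have "covariance M (\<lambda>\<omega>. \<Sum>e\<in>E. a e * \<xi> e \<omega>) (\<lambda>\<omega>. \<Sum>e\<in>E. b e * \<xi> e \<omega>)
      = expectation (\<lambda>\<omega>. \<Sum>e\<in>E. \<Sum>f\<in>E. a e * b f * (\<xi> e \<omega> * \<xi> f \<omega>))"
    unfolding covariance_def mean by simp
  also have "\<dots> = (\<Sum>e\<in>E. \<Sum>f\<in>E. a e * b f * expectation (\<lambda>\<omega>. \<xi> e \<omega> * \<xi> f \<omega>))"
    using E products(1) by (simp add: Bochner_Integration.integral_sum subset_iff)
  also have "\<dots> = (\<Sum>e\<in>E. \<Sum>f\<in>E. a e * b f * (if e = f then 1 else 0))"
    using E products(2) by (intro sum.cong refl) (simp add: subset_iff)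
  also have "\<dots> = (\<Sum>e\<in>E. a e * b e)"
    using E by (simp add: if_distrib cong: if_cong)
  finally show ?thesis .
qed

section \<open>The basis functions\<close>

locale diffusion = linear_flow alpha F
  for alpha :: "real \<Rightarrow> ('d::{finite,linorder}) sqm" and F :: "real \<Rightarrow> real \<Rightarrow> 'd sqm" +
  fixes sqrtGam :: "real \<Rightarrow> ((real, 'm::finite) vec, 'd) vec" and Gam :: "real \<Rightarrow> 'd sqm"
  assumes sqrtGam_cont: "continuous_on {0..1} sqrtGam"
    and Gam_def: "\<And>t. Gam t = sqrtGam t ** transpose (sqrtGam t)"
    and nondeg: "\<And>u v (x::'d rvec). 0 \<le> u \<Longrightarrow> u < v \<Longrightarrow> v \<le> 1 \<Longrightarrow> x \<noteq> 0 \<Longrightarrow>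
        x \<bullet> ((F u v ** hu F Gam u u v ** transpose (F u v)) *v x) > 0"
begin

lemma hu_integrable:
  assumes "u \<in> {0..1}" "a \<in> {0..1}" "b \<in> {0..1}"
  shows "(\<lambda>w. F w u ** Gam w ** transpose (F w u)) integrable_on {a..b}"
proof -
  have "continuous_on {0..1} Gam"
    unfolding Gam_def[abs_def]
    by (intro bounded_bilinear.continuous_on[OF bounded_bilinear_matrix_mult sqrtGam_cont]
        bounded_linear.continuous_on[OF bounded_linear_transpose sqrtGam_cont])
  then have "continuous_on {0..1} (\<lambda>w. F w u ** Gam w ** transpose (F w u))"
    by (intro bounded_bilinear.continuous_on[OF bounded_bilinear_matrix_mult] continuous_on_flow_fst
        bounded_linear.continuous_on[OF bounded_linear_transpose] assms(1))
  then show ?thesis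
    by (rule integrable_continuous_interval[OF continuous_on_subset]) (use assms in auto)
qed

lemma hu_change_base:
  assumes u: "u \<in> {0..1}" and v: "v \<in> {0..1}" and a: "a \<in> {0..1}" and b: "b \<in> {0..1}"
  shows "hu F Gam v a b = F u v ** hu F Gam u a b ** transpose (F u v)"
proof -
  have "hu F Gam v a b = integral {a..b} ((\<lambda>X. F u v ** X ** transpose (F u v)) \<circ> (\<lambda>w. F w u ** Gam w ** transpose (F w u)))"
    unfolding hu_def
  proof (rule integral_cong)
    fix w assume "w \<in> {a..b}"
    then have "F w v = F u v ** F w u" using flow_cocycle[OF _ u v] a b by auto
    then show "F w v ** Gam w ** transpose (F w v) =
        ((\<lambda>X. F u v ** X ** transpose (F u v)) \<circ> (\<lambda>w. F w u ** Gam w ** transpose (F w u))) w"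
      by (simp add: matrix_transpose_mul matrix_mul_assoc)
  qed
  also have "\<dots> = F u v ** hu F Gam u a b ** transpose (F u v)"
    unfolding hu_def by (rule integral_linear[OF hu_integrable[OF u a b] bounded_linear_sandwich])
  finally show ?thesis .
qed

lemma hu_symmetric:
  assumes "u \<in> {0..1}" "a \<in> {0..1}" "b \<in> {0..1}"
  shows "transpose (hu F Gam u a b) = hu F Gam u a b"
proof -
  have "transpose (hu F Gam u a b) = integral {a..b} (transpose \<circ> (\<lambda>w. F w u ** Gam w ** transpose (F w u)))"
    unfolding hu_def by (rule integral_linear[OF hu_integrable[OF assms] bounded_linear_transpose, symmetric])
  also have "\<dots> = hu F Gam u a b"
    unfolding hu_def by (rule integral_cong) (simp add: matrix_transpose_mul Gam_def matrix_mul_assoc)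
  finally show ?thesis .
qed

lemma hu_split:
  assumes "u \<in> {0..1}" "0 \<le> a" "a \<le> c" "c \<le> b" "b \<le> 1"
  shows "hu F Gam u a b = hu F Gam u a c + hu F Gam u c b"
  unfolding hu_def using assms
  by (intro Henstock_Kurzweil_Integration.integral_combine[symmetric] hu_integrable) auto

text \<open>The non-degeneracy hypothesis is stated for \<open>h\<^sub>v(u, v)\<close>; moving the base point with the
  flow transfers positivity to every \<open>h\<^sub>u(a, b)\<close>.\<close>

lemma hu_pos_def:
  assumes u: "u \<in> {0..1}" and "0 \<le> a" "a < b" "b \<le> 1"
  shows "pos_def_matrix (hu F Gam u a b)"
proof -
  have a: "a \<in> {0..1}" and b: "b \<in> {0..1}" using assms by auto
  have "pos_def_matrix (F a b ** hu F Gam a a b ** transpose (F a b))"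
    unfolding pos_def_matrix_def using nondeg assms by blast
  then have "pos_def_matrix (F b u ** hu F Gam b a b ** transpose (F b u))"
    using hu_change_base[OF a b a b] by (intro pos_def_matrix_congruence invertible_flow b u) simp
  then show ?thesis using hu_change_base[OF b u a b] by simp
qed

lemma SigmaNK_pos_def_symmetric:
  assumes "0 \<le> l n k" "l n k < m n k" "m n k < r n k" "r n k \<le> 1"
  shows "pos_def_matrix (SigmaNK F Gam l m r n k)" "transpose (SigmaNK F Gam l m r n k) = SigmaNK F Gam l m r n k"
proof -
  have m: "m n k \<in> {0..1}" and "l n k \<in> {0..1}" "r n k \<in> {0..1}" using assms by auto
  then have "pos_def_matrix (hu F Gam (m n k) (l n k) (m n k))" "pos_def_matrix (hu F Gam (m n k) (m n k) (r n k))"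
    "transpose (hu F Gam (m n k) (l n k) (m n k)) = hu F Gam (m n k) (l n k) (m n k)"
    "transpose (hu F Gam (m n k) (m n k) (r n k)) = hu F Gam (m n k) (m n k) (r n k)"
    using assms by (auto intro!: hu_pos_def hu_symmetric)
  moreover have "hu F Gam (m n k) (l n k) (r n k) = hu F Gam (m n k) (l n k) (m n k) + hu F Gam (m n k) (m n k) (r n k)"
    using assms by (intro hu_split m) auto
  ultimately show "pos_def_matrix (SigmaNK F Gam l m r n k)"
    "transpose (SigmaNK F Gam l m r n k) = SigmaNK F Gam l m r n k"
    unfolding SigmaNK_def using parallel_sum_pos_def_symmetric by metis+
qed

lemma sigmaNK_00_matrix_pos_def_symmetric:
  "pos_def_matrix (gg F 1 ** hh F Gam 0 1 ** transpose (gg F 1))"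
  "transpose (gg F 1 ** hh F Gam 0 1 ** transpose (gg F 1)) = gg F 1 ** hh F Gam 0 1 ** transpose (gg F 1)"
proof -
  show "pos_def_matrix (gg F 1 ** hh F Gam 0 1 ** transpose (gg F 1))"
    unfolding pos_def_matrix_def gg_def hh_def using nondeg[of 0 1] by simp
  have "transpose (hu F Gam 0 0 1) = hu F Gam 0 0 1" by (rule hu_symmetric) auto
  then show "transpose (gg F 1 ** hh F Gam 0 1 ** transpose (gg F 1)) = gg F 1 ** hh F Gam 0 1 ** transpose (gg F 1)"
    by (simp add: gg_def hh_def matrix_transpose_mul matrix_mul_assoc)
qed

end

lemma Iset_cases [consumes 1, case_names root node]:
  assumes "p \<in> Iset"
  obtains "p = (0,0)" | n k where "p = (n,k)" "1 \<le> n" "k < 2^(n-1)"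
  using assms unfolding Iset_def by auto

lemma finite_blk_idx: "finite (blk_idx N :: ((nat \<times> nat) \<times> 'd::finite) set)"
proof -
  have "IsetN N \<subseteq> {0..N} \<times> {0..<2^N}"
    unfolding IsetN_def Iset_def by (auto elim!: less_le_trans intro: power_increasing)
  then have "finite (IsetN N)" by (rule finite_subset) auto
  then show ?thesis unfolding blk_idx_def by simp
qed

lemma blk_idx_subset: "blk_idx N \<subseteq> Iset \<times> UNIV"
  unfolding blk_idx_def IsetN_def Iset_def by auto

lemma XN_component:
  "XN F Gam l m r Xi N (fst a) \<omega> $ snd a =
     (\<Sum>e\<in>blk_idx N. PsiN F Gam l m r a e * (\<lambda>(p, c) \<omega>. Xi p \<omega> $ c) e \<omega>)"
proof -
  have "XN F Gam l m r Xi N (fst a) \<omega> $ snd a =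
      (\<Sum>p\<in>IsetN N. \<Sum>c\<in>UNIV. psi F Gam l m r p (midpt m (fst a)) $ snd a $ c * Xi p \<omega> $ c)"
    by (simp add: XN_def sum_component matrix_vector_mult_def)
  then show ?thesis by (simp add: blk_idx_def sum.cartesian_product PsiN_def case_prod_beta)
qed

locale basis_setting = diffusion alpha F sqrtGam Gam + nested_partition l m r
  for alpha :: "real \<Rightarrow> ('d::{finite,linorder}) sqm" and F :: "real \<Rightarrow> real \<Rightarrow> 'd sqm"
    and sqrtGam :: "real \<Rightarrow> ((real, 'm::finite) vec, 'd) vec" and Gam :: "real \<Rightarrow> 'd sqm"
    and l m r :: "nat \<Rightarrow> nat \<Rightarrow> real"
begin

lemma sigmaNK_lower_tri_pos_diag:
  assumes "p \<in> Iset"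
  shows "lower_tri (sigmaNK F Gam l m r p) \<and> (\<forall>i. sigmaNK F Gam l m r p $ i $ i > 0)"
  using assms
proof (cases rule: Iset_cases)
  case root
  then show ?thesis
    using chol_is_cholesky_factor[OF sigmaNK_00_matrix_pos_def_symmetric] by (simp add: sigmaNK_def)
next
  case (node n k)
  then show ?thesis
    using chol_is_cholesky_factor[OF SigmaNK_pos_def_symmetric] partition_in_unit_interval lmr
    by (simp add: sigmaNK_def)
qed

lemma psi_at_own_midpt:
  assumes "p \<in> Iset"
  shows "psi F Gam l m r p (midpt m p) = sigmaNK F Gam l m r p"
  using assms
proof (cases rule: Iset_cases)
  case root
  have "invertible (hh F Gam 0 1)" unfolding hh_def by (intro pos_def_matrix_invertible hu_pos_def) auto
  moreover have "invertible (gg F 1)" unfolding gg_def by (intro invertible_flow) auto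
  ultimately show ?thesis using root matrix_mul_cancel_inverses by (simp add: psi_def midpt_def Lmat_def)
next
  case (node n k)
  then have "0 \<le> l n k" "r n k \<le> 1" "l n k < m n k" "m n k < r n k"
    using partition_in_unit_interval lmr by auto
  then have "invertible (hh F Gam (l n k) (m n k))" "invertible (gg F (m n k))"
    unfolding hh_def gg_def by (auto intro!: pos_def_matrix_invertible[OF hu_pos_def] invertible_flow)
  then show ?thesis
    using node matrix_mul_cancel_inverses \<open>l n k < m n k\<close> \<open>m n k < r n k\<close>
    by (simp add: psi_def midpt_def Lmat_def Let_def)
qed

text \<open>\<open>psi (n, k)\<close> vanishes outside \<open>[l n k, r n k]\<close> and, since \<open>h(t, t) = 0\<close>, also at its
  endpoints.\<close>

lemma psi_at_earlier_midpt:
  assumes p: "p \<in> Iset" and q: "q \<in> Iset" and lt: "pos q < pos p"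
  shows "psi F Gam l m r p (midpt m q) = 0"
  using p
proof (cases rule: Iset_cases)
  case root
  then show ?thesis using lt by (simp add: pos_def)
next
  case (node n k)
  then have "midpt m q \<le> l n k \<or> r n k \<le> midpt m q" "l n k < m n k" "m n k < r n k"
    using midpt_outside_later q lt lmr by auto
  then show ?thesis using node by (auto simp: psi_def Let_def hh_def hu_def)
qed

lemma PsiN_lower_triangular:
  assumes "a \<in> blk_idx N" "b \<in> blk_idx N" "idx_less a b"
  shows "PsiN F Gam l m r a b = 0"
proof -
  have a: "fst a \<in> Iset" and b: "fst b \<in> Iset" using assms(1,2) blk_idx_subset[of N] by (auto simp: mem_Times_iff)
  from assms(3) consider "pos (fst a) < pos (fst b)" | "fst a = fst b" "snd a < snd b"
    unfolding idx_less_def by blast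
  then show ?thesis
  proof cases
    case 1
    then show ?thesis using psi_at_earlier_midpt[OF b a] by (simp add: PsiN_def)
  next
    case 2
    then show ?thesis using psi_at_own_midpt[OF a] sigmaNK_lower_tri_pos_diag[OF a]
      by (simp add: PsiN_def lower_tri_def)
  qed
qed

lemma PsiN_diag_pos: "a \<in> blk_idx N \<Longrightarrow> PsiN F Gam l m r a a > 0"
  using blk_idx_subset psi_at_own_midpt sigmaNK_lower_tri_pos_diag by (force simp: PsiN_def)

end

theorem lemma2:
  fixes alpha :: "real \<Rightarrow> ('d::{finite,linorder}) sqm"
    and sqrtGam :: "real \<Rightarrow> ((real, 'm::finite) vec, 'd::{finite,linorder}) vec"
    and Gam :: "real \<Rightarrow> ('d::{finite,linorder}) sqm"
    and F :: "real \<Rightarrow> real \<Rightarrow> ('d::{finite,linorder}) sqm"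
    and rho :: real
    and l m r :: "nat \<Rightarrow> nat \<Rightarrow> real"
    and M :: "'a measure"
    and Xi :: "nat \<times> nat \<Rightarrow> 'a \<Rightarrow> ('d::{finite,linorder}) rvec"
    and N :: nat
  assumes alpha_cont: "continuous_on {0..1} alpha"
    and sqrtGam_cont: "continuous_on {0..1} sqrtGam"
    and Gam_def: "\<And>t. Gam t = sqrtGam t ** transpose (sqrtGam t)"
    and flow_deriv: "\<And>s t. s \<in> {0..1} \<Longrightarrow> t \<in> {0..1} \<Longrightarrow>
        ((\<lambda>t. F s t) has_vector_derivative (alpha t ** F s t)) (at t within {0..1})"
    and flow_init: "\<And>s. s \<in> {0..1} \<Longrightarrow> F s s = mat 1"
    and nondeg: "\<And>u v (x::('d::{finite,linorder}) rvec). 0 \<le> u \<Longrightarrow> u < v \<Longrightarrow> v \<le> 1 \<Longrightarrow> x \<noteq> 0 \<Longrightarrow>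
        x \<bullet> ((F u v ** hu F Gam u u v ** transpose (F u v)) *v x) > 0"
    and rho: "0 < rho" "rho < 1"
    and lmr: "\<And>n k. 1 \<le> n \<Longrightarrow> k < 2^(n-1) \<Longrightarrow> l n k < m n k \<and> m n k < r n k"
    and l10: "l 1 0 = 0" and r10: "r 1 0 = 1"
    and refine_l: "\<And>n k. 1 \<le> n \<Longrightarrow> k < 2^(n-1) \<Longrightarrow> l (n+1) (2*k) = l n k"
    and refine_m1: "\<And>n k. 1 \<le> n \<Longrightarrow> k < 2^(n-1) \<Longrightarrow> r (n+1) (2*k) = m n k"
    and refine_m2: "\<And>n k. 1 \<le> n \<Longrightarrow> k < 2^(n-1) \<Longrightarrow> l (n+1) (2*k+1) = m n k"
    and refine_r: "\<And>n k. 1 \<le> n \<Longrightarrow> k < 2^(n-1) \<Longrightarrow> r (n+1) (2*k+1) = r n k"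
    and shrink: "\<And>n k. 1 \<le> n \<Longrightarrow> k < 2^(n-1) \<Longrightarrow>
        max (r n k - m n k) (m n k - l n k) < rho * (r n k - l n k)"
    and prob: "prob_space M"
    and indep: "prob_space.indep_vars M (\<lambda>_. borel) (\<lambda>(p, c) \<omega>. Xi p \<omega> $ c) (Iset \<times> UNIV)"
    and gauss: "\<And>p c. p \<in> Iset \<Longrightarrow> distributed M lborel (\<lambda>\<omega>. Xi p \<omega> $ c) std_normal_density"
    and N: "1 \<le> N"
  shows "(\<forall>a\<in>blk_idx N. \<forall>b\<in>blk_idx N.
            SigmaN M F Gam l m r Xi N a b = (\<Sum>e\<in>blk_idx N. PsiN F Gam l m r a e * PsiN F Gam l m r b e))
         \<and> is_cholesky (blk_idx N) idx_less (SigmaN M F Gam l m r Xi N) (PsiN F Gam l m r)"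
proof -
  interpret basis_setting alpha F sqrtGam Gam l m r
    by unfold_locales (fact assms)+
  interpret prob_space M by (rule prob)
  have "SigmaN M F Gam l m r Xi N a b = (\<Sum>e\<in>blk_idx N. PsiN F Gam l m r a e * PsiN F Gam l m r b e)" for a b
    unfolding SigmaN_def XN_component
    by (rule covariance_indep_std_normal_combinations[OF indep _ finite_blk_idx blk_idx_subset])
      (use gauss in auto)
  then show ?thesis
    unfolding is_cholesky_def using PsiN_lower_triangular PsiN_diag_pos by blast
qed

end
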